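(* In REFORM with the RPTSC reward scheme with at most $k=2$ pairings, in the setting and expected-reward model described in the context, suppose all agents other than $a_i$ play the trustworthy strategy and $a_i$ plays the random strategy, reporting $y_i$ at time $t_i$. Then the expected reward of $a_i$ is $$E_{ra}=\alpha r\beta(t_i)(1-p_{y_i})\left(1-(1-p_{y_i})^{n-1}\right).$$
   Context: Setting. In each round there are $n\ge 2$ statistically independent, a-priori similar tasks with common finite answer space $\mathcal{X}$. An agent either exerts high effort and obtains an evaluation $x_i\in\mathcal{X}$, or exerts low effort and has no evaluation ($x_i=\varnothing$). Trustworthy strategy: exert high effort and report the true evaluation at the time $t_i^*$ needed to solve the task. Random strategy: exert low effort and report an answer drawn from the agent's prior, at any time. A decay factor $\beta(t)>0$, decreasing in $t$, multiplies rewards; each agent has a reputation (TERM) score $\Omega$. REFORM with RPTSC reward ($\alpha>0$, at most $k$ pairings): sample $n-1$ reports, one from each other task, and let $f(y_i)$ be the fraction equal to $y_i$. Repeatedly choose a random peer $a_p$ on the same task with report $y_p$ and score $\Omega_p$: if $y_i=y_p$, reward $\alpha\beta(t_i)(1/f(y_i)-1)$ and stop; otherwise if $\Omega_i\le\Omega_p$ or $k$ pairings used, reward $-\alpha\beta(t_i)$ (or $0$ if $f(y_i)=0$) and stop; else draw a new peer. Beliefs. $p_y=P_p(y)\in(0,1)$ is the prior probability that a peer's evaluation is $y$; $P_{p|i}(y\mid x_i)$ is the posterior given $a_i$'s evaluation, and $P_{p|i}(y\mid\varnothing)=p_y$. $q_y=Q_p(y)$, $q'_y=Q_{p|i}(y\mid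 x_i)$ are the corresponding beliefs about peers' reports; when all other agents are trustworthy, $q_y=p_y$ and $q'_y=P_{p|i}(y\mid x_i)$. $r\in[0,1]$ is $a_i$'s belief that a random peer has TERM score below $\Omega_i$, the same for every peer. Expected-reward model. If $q_{y_i}>0$, with $E'=\alpha\left(\frac{q'_{y_i}}{q_{y_i}}-1\right)\left(1-(1-q_{y_i})^{n-1}\right)$ and $M'=\alpha\left(\frac{1}{q_{y_i}}-1\right)\left(1-(1-q_{y_i})^{n-1}\right)$, the expected reward is computed pairing by pairing independently: with probability $1-r$ the peer's score is not below $\Omega_i$ and the pairing is final with expected reward $\beta(t_i)E'$; the $k$-th pairing is always final with expected reward $\beta(t_i)E'$; otherwise (probability $r$, not last pairing) with probability $q'_{y_i}$ reports match giving $\beta(t_i)M'$, and with probability $1-q'_{y_i}$ a new pairing is made. *)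

theory Defs
  imports Complex_Main
begin

text \<open>Per-pairing auxiliary quantities of the expected-reward model for RPTSC,
  for a report y with q = Q_p(y) (belief about a peer's report) and
  q' = Q_{p|i}(y | x_i) (posterior belief).\<close>

definition E_prime :: "real \<Rightarrow> nat \<Rightarrow> real \<Rightarrow> real \<Rightarrow> real" where
  "E_prime \<alpha> n q q' = \<alpha> * (q' / q - 1) * (1 - (1 - q) ^ (n - 1))"

definition M_prime :: "real \<Rightarrow> nat \<Rightarrow> real \<Rightarrow> real" where
  "M_prime \<alpha> n q = \<alpha> * (1 / q - 1) * (1 - (1 - q) ^ (n - 1))"

text \<open>Expected reward when j pairings are still available (j \<ge> 1), computed pairing
  by pairing: with probability 1 - r the pairing is final with reward bt * E';
  the last available pairing is always final with reward bt * E'; otherwise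
  (probability r) reports match with probability q' (reward bt * M') and with
  probability 1 - q' a new pairing is made.\<close>

fun rptsc_pairings :: "real \<Rightarrow> real \<Rightarrow> nat \<Rightarrow> real \<Rightarrow> real \<Rightarrow> real \<Rightarrow> nat \<Rightarrow> real" where
  "rptsc_pairings \<alpha> bt n r q q' 0 = 0"
| "rptsc_pairings \<alpha> bt n r q q' (Suc 0) = bt * E_prime \<alpha> n q q'"
| "rptsc_pairings \<alpha> bt n r q q' (Suc (Suc j)) =
     (1 - r) * (bt * E_prime \<alpha> n q q')
     + r * (q' * (bt * M_prime \<alpha> n q)
            + (1 - q') * rptsc_pairings \<alpha> bt n r q q' (Suc j))"

definition rptsc_expected_reward ::
  "real \<Rightarrow> (real \<Rightarrow> real) \<Rightarrow> nat \<Rightarrow> real \<Rightarrow> nat \<Rightarrow> real \<Rightarrow> real \<Rightarrow> real \<Rightarrow> real" where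
  "rptsc_expected_reward \<alpha> \<beta> n r k t q q' = rptsc_pairings \<alpha> (\<beta> t) n r q q' k"

end

theory Submission
  imports Defs
begin

text \<open>An agent without an evaluation has posterior equal to prior, so the expected
  reward E' of every final pairing vanishes. Only the non-final pairings contribute:
  each one is reached with the peer ranked below a_i (probability r) and pays M'
  when the reports match (probability q), and q M' = \<alpha> (1 - q) (1 - (1 - q)^(n-1)).
  With k = 2 there is exactly one non-final pairing.\<close>

lemma E_prime_prior_eq_posterior:
  assumes "q \<noteq> 0"
  shows "E_prime \<alpha> n q q = 0"
  using assms by (simp add: E_prime_def)

lemma mult_M_prime:
  assumes "q \<noteq> 0"
  shows "q * M_prime \<alpha> n q = \<alpha> * (1 - q) * (1 - (1 - q) ^ (n - 1))"
  using assms by (simp add: M_prime_def field_simps)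

lemma rptsc_pairings_prior_eq_posterior:
  assumes "q \<noteq> 0"
  shows "rptsc_pairings \<alpha> bt n r q q (Suc k)
           = r * bt * (q * M_prime \<alpha> n q) * (\<Sum>i<k. (r * (1 - q)) ^ i)"
proof (induction k)
  case 0
  show ?case using assms by (simp add: E_prime_prior_eq_posterior)
next
  case (Suc k)
  have "rptsc_pairings \<alpha> bt n r q q (Suc (Suc k))
          = r * (q * (bt * M_prime \<alpha> n q)) + r * (1 - q) * rptsc_pairings \<alpha> bt n r q q (Suc k)"
    using assms by (simp add: E_prime_prior_eq_posterior algebra_simps)
  also have "\<dots> = r * bt * (q * M_prime \<alpha> n q)
                   * (1 + (\<Sum>i<k. (r * (1 - q)) ^ Suc i))"
    by (simp add: Suc.IH sum_distrib_left algebra_simps)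
  also have "\<dots> = r * bt * (q * M_prime \<alpha> n q) * (\<Sum>i<Suc k. (r * (1 - q)) ^ i)"
    by (simp only: sum.lessThan_Suc_shift power_0)
  finally show ?case .
qed

theorem lemma4:
  fixes \<alpha> :: real and \<beta> :: "real \<Rightarrow> real" and n :: nat and r :: real and t_i :: real
    and p :: "'x::finite \<Rightarrow> real"
    and post :: "'x option \<Rightarrow> 'x \<Rightarrow> real"
    and q q' :: "'x \<Rightarrow> real"
    and x_i :: "'x option" and y_i :: 'x
  assumes "n \<ge> 2" and "\<alpha> > 0"
    and "\<And>t. \<beta> t > 0" and "antimono \<beta>"
    and "0 \<le> r" and "r \<le> 1"
    and "\<And>y. 0 < p y \<and> p y < 1"
    and "\<And>y. post None y = p y"
    \<comment> \<open>a_i plays the random strategy: low effort, no evaluation\<close>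
    and "x_i = None"
    \<comment> \<open>all other agents trustworthy: beliefs about reports equal beliefs about evaluations\<close>
    and "q = p" and "q' = post x_i"
  shows "rptsc_expected_reward \<alpha> \<beta> n r 2 t_i (q y_i) (q' y_i)
         = \<alpha> * r * \<beta> t_i * (1 - p y_i) * (1 - (1 - p y_i) ^ (n - 1))"
proof -
  have prior_nonzero: "p y_i \<noteq> 0"
    using assms(7) by (metis less_irrefl)
  have beliefs: "q y_i = p y_i" "q' y_i = p y_i"
    using assms(8-11) by simp_all
  have "rptsc_expected_reward \<alpha> \<beta> n r 2 t_i (q y_i) (q' y_i)
          = rptsc_pairings \<alpha> (\<beta> t_i) n r (p y_i) (p y_i) (Suc 1)"
    by (simp add: rptsc_expected_reward_def beliefs numeral_2_eq_2)
  also have "\<dots> = r * \<beta> t_i * (p y_i * M_prime \<alpha> n (p y_i))"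
    using rptsc_pairings_prior_eq_posterior[OF prior_nonzero, of \<alpha> "\<beta> t_i" n r 1] by simp
  also have "\<dots> = \<alpha> * r * \<beta> t_i * (1 - p y_i) * (1 - (1 - p y_i) ^ (n - 1))"
    by (simp add: mult_M_prime[OF prior_nonzero])
  finally show ?thesis .
qed

end
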